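(* Let $\tau\ge 1$ be an integer and $0<\kappa\le 1$. Let $\mathcal{B}=(B_1,\ldots,B_K)$ be a blockade in a graph, of width $W$. Then there is an equicardinal $(\kappa,\tau)$-support-invariant contraction $\mathcal{B}'=(B_1',\ldots,B_K')$ of $\mathcal{B}$ with width at least $\kappa^{2^K\tau^\tau}W$.
   Context: A blockade in a graph $G$ is a sequence $\mathcal{B}=(B_i:i\in I)$ of pairwise disjoint nonempty subsets of $V(G)$ (blocks), $I$ a finite set of integers; its length is $|I|$, its width is $\min_i|B_i|$; it is equicardinal if all blocks have the same cardinality. A contraction of $\mathcal{B}$ is a blockade $(B_i':i\in I)$ with $\emptyset\ne B_i'\subseteq B_i$ for all $i$. An induced subgraph $H$ of $G$ is $\mathcal{B}$-rainbow if each vertex of $H$ lies in some block and no two lie in the same block; its support is the set of $i\in I$ with $V(H)\cap B_i\neq\emptyset$. The $\mathcal{B}$-ordering of a $\mathcal{B}$-rainbow $H$ is the linear order on $V(H)$ with $u<v$ if $u\in B_i$, $v\in B_j$, $i<j$. An ordered graph is a graph with a linear order of its vertex set; a $\mathcal{B}$-rainbow $H$ is a copy of an ordered graph $J$ if $H$ with its $\mathcal{B}$-ordering is isomorphic to $J$ as ordered graphs. The trace of an ordered graph $J$ relative to $\mathcal{B}$ is the set of supports of all $\mathcal{B}$-rainbow copies of $J$. For $0<\kappa\le1$ and integer $\tau\ge1$, $\mathcal{B}$ is $(\kappa,\tau)$-support-invariant if for every contraction $\mathcal{B}'$ of $\mathcal{B}$ of width at least $\kappa$ times the width of $\mathcal{B}$,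 and every ordered tree $J$ with $|J|\le\tau$, the trace of $J$ relative to $\mathcal{B}$ equals the trace of $J$ relative to $\mathcal{B}'$. *)

theory Defs
  imports Complex_Main
begin

definition graph :: "'v set \<Rightarrow> ('v \<Rightarrow> 'v \<Rightarrow> bool) \<Rightarrow> bool" where
  "graph V E \<longleftrightarrow> finite V \<and> (\<forall>x y. E x y \<longrightarrow> E y x) \<and> (\<forall>x. \<not> E x x)
      \<and> (\<forall>x y. E x y \<longrightarrow> x \<in> V \<and> y \<in> V)"

definition blockade :: "'v set \<Rightarrow> int set \<Rightarrow> (int \<Rightarrow> 'v set) \<Rightarrow> bool" where
  "blockade V I B \<longleftrightarrow> finite I \<and> (\<forall>i\<in>I. B i \<noteq> {} \<and> B i \<subseteq> V)
      \<and> (\<forall>i\<in>I. \<forall>j\<in>I. i \<noteq> j \<longrightarrow> B i \<inter> B j = {})"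

definition width :: "int set \<Rightarrow> (int \<Rightarrow> 'v set) \<Rightarrow> nat" where
  "width I B = Min ((\<lambda>i. card (B i)) ` I)"

definition equicardinal :: "int set \<Rightarrow> (int \<Rightarrow> 'v set) \<Rightarrow> bool" where
  "equicardinal I B \<longleftrightarrow> (\<forall>i\<in>I. \<forall>j\<in>I. card (B i) = card (B j))"

definition contraction :: "'v set \<Rightarrow> int set \<Rightarrow> (int \<Rightarrow> 'v set) \<Rightarrow> (int \<Rightarrow> 'v set) \<Rightarrow> bool" where
  "contraction V I B B' \<longleftrightarrow> blockade V I B' \<and> (\<forall>i\<in>I. B' i \<noteq> {} \<and> B' i \<subseteq> B i)"

text \<open>Ordered graphs: vertex set {0..<n} with the natural order, adjacency JE.\<close>
definition ordered_graph :: "nat \<Rightarrow> (nat \<Rightarrow> nat \<Rightarrow> bool) \<Rightarrow> bool" where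
  "ordered_graph n JE \<longleftrightarrow> (\<forall>a b. JE a b \<longrightarrow> JE b a) \<and> (\<forall>a. \<not> JE a a)
      \<and> (\<forall>a b. JE a b \<longrightarrow> a < n \<and> b < n)"

definition og_connected :: "nat \<Rightarrow> (nat \<Rightarrow> nat \<Rightarrow> bool) \<Rightarrow> bool" where
  "og_connected n JE \<longleftrightarrow> (\<forall>a<n. \<forall>b<n. JE\<^sup>*\<^sup>* a b)"

definition is_cycle :: "(nat \<Rightarrow> nat \<Rightarrow> bool) \<Rightarrow> nat list \<Rightarrow> bool" where
  "is_cycle JE cs \<longleftrightarrow> length cs \<ge> 3 \<and> distinct cs
      \<and> (\<forall>k. Suc k < length cs \<longrightarrow> JE (cs ! k) (cs ! Suc k))
      \<and> JE (last cs) (hd cs)"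

definition ordered_tree :: "nat \<Rightarrow> (nat \<Rightarrow> nat \<Rightarrow> bool) \<Rightarrow> bool" where
  "ordered_tree n JE \<longleftrightarrow> ordered_graph n JE \<and> n \<ge> 1 \<and> og_connected n JE
      \<and> (\<nexists>cs. is_cycle JE cs)"

text \<open>A B-rainbow copy of the ordered graph (n, JE): the vertex a of J is mapped to
  f a, lying in block phi a; phi is strictly increasing (so distinct vertices lie in
  distinct blocks, and the B-ordering agrees with the order of J), and adjacency in
  the induced subgraph on the image matches J.\<close>
definition rainbow_copy ::
  "('v \<Rightarrow> 'v \<Rightarrow> bool) \<Rightarrow> int set \<Rightarrow> (int \<Rightarrow> 'v set) \<Rightarrow> nat \<Rightarrow> (nat \<Rightarrow> nat \<Rightarrow> bool)
     \<Rightarrow> (nat \<Rightarrow> int) \<Rightarrow> (nat \<Rightarrow> 'v) \<Rightarrow> bool" where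
  "rainbow_copy E I B n JE phi f \<longleftrightarrow>
     (\<forall>a<n. phi a \<in> I \<and> f a \<in> B (phi a))
     \<and> (\<forall>a<n. \<forall>b<n. a < b \<longrightarrow> phi a < phi b)
     \<and> (\<forall>a<n. \<forall>b<n. E (f a) (f b) \<longleftrightarrow> JE a b)"

definition trace ::
  "('v \<Rightarrow> 'v \<Rightarrow> bool) \<Rightarrow> int set \<Rightarrow> (int \<Rightarrow> 'v set) \<Rightarrow> nat \<Rightarrow> (nat \<Rightarrow> nat \<Rightarrow> bool) \<Rightarrow> int set set" where
  "trace E I B n JE = {phi ` {0..<n} | phi f. rainbow_copy E I B n JE phi f}"

definition support_invariant ::
  "'v set \<Rightarrow> ('v \<Rightarrow> 'v \<Rightarrow> bool) \<Rightarrow> real \<Rightarrow> nat \<Rightarrow> int set \<Rightarrow> (int \<Rightarrow> 'v set) \<Rightarrow> bool" where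
  "support_invariant V E \<kappa> \<tau> I B \<longleftrightarrow>
     (\<forall>B'. contraction V I B B' \<and> real (width I B') \<ge> \<kappa> * real (width I B) \<longrightarrow>
        (\<forall>n JE. ordered_tree n JE \<and> n \<le> \<tau> \<longrightarrow> trace E I B n JE = trace E I B' n JE))"

end

theory Submission
  imports Defs "HOL-Library.FuncSet"
begin

text \<open>Each time a blockade fails to be support-invariant, some contraction of relative width
  at least \<kappa> loses a support of some ordered tree with at most \<tau> vertices; as traces only shrink
  under contraction, the set of realised pairs (tree, support) strictly decreases. A tree on
  \<open>{0..<n}\<close> is determined by its parent function towards the root 0, so there are at most
  \<open>\<tau>\<^sup>\<tau>\<close> such trees and at most \<open>2\<^sup>K \<tau>\<^sup>\<tau>\<close> realised pairs. Hence after at most that many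
  contractions we reach a support-invariant blockade, which can finally be trimmed to equal
  block sizes without changing its width.\<close>

locale rooted_tree =
  fixes n :: nat and JE :: "nat \<Rightarrow> nat \<Rightarrow> bool"
  assumes tree: "ordered_tree n JE"
begin

lemma edge_sym: "JE a b \<Longrightarrow> JE b a"
  and no_loop: "\<not> JE a a"
  and edge_bound: "JE a b \<Longrightarrow> a < n \<and> b < n"
  and nonempty: "n \<ge> 1"
  and connected: "a < n \<Longrightarrow> b < n \<Longrightarrow> JE\<^sup>*\<^sup>* a b"
  and acyclic: "\<not> is_cycle JE cs"
  using tree unfolding ordered_tree_def ordered_graph_def og_connected_def by auto

definition depth :: "nat \<Rightarrow> nat" where
  "depth v = (LEAST k. (JE ^^ k) 0 v)"

lemma depth_path: "v < n \<Longrightarrow> (JE ^^ depth v) 0 v"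
  unfolding depth_def
  by (rule LeastI_ex) (use connected[of 0 v] nonempty in \<open>auto simp: rtranclp_power\<close>)

lemma depth_le: "(JE ^^ k) 0 v \<Longrightarrow> depth v \<le> k"
  unfolding depth_def by (rule Least_le)

lemma depth_root: "depth 0 = 0"
  using depth_le[of 0 0] by simp

lemma depth_eq_0_iff: "v < n \<Longrightarrow> depth v = 0 \<longleftrightarrow> v = 0"
  using depth_path[of v] depth_root by auto

lemma depth_edge_le: "JE u v \<Longrightarrow> depth v \<le> depth u + 1"
  using depth_path[of u] edge_bound[of u v] by (metis Suc_eq_plus1 depth_le relpowp_Suc_I)

lemma parent_exists:
  assumes "v < n" "v \<noteq> 0"
  shows "\<exists>u. JE u v \<and> depth u + 1 = depth v"
proof -
  obtain k where k: "depth v = Suc k"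
    using assms depth_eq_0_iff by (cases "depth v") auto
  with depth_path[OF assms(1)] have "(JE ^^ Suc k) 0 v" by simp
  then obtain u where u: "(JE ^^ k) 0 u" "JE u v" by (rule relpowp_Suc_E)
  have "depth u \<le> k" using u(1) by (rule depth_le)
  with depth_edge_le[OF u(2)] u(2) k show ?thesis by auto
qed

definition parent :: "nat \<Rightarrow> nat" where
  "parent v = (SOME u. JE u v \<and> depth u + 1 = depth v)"

lemma parent_edge_depth: "v < n \<Longrightarrow> v \<noteq> 0 \<Longrightarrow> JE (parent v) v \<and> depth (parent v) + 1 = depth v"
  unfolding parent_def by (rule someI_ex) (rule parent_exists)

definition ancestor :: "nat \<Rightarrow> nat \<Rightarrow> nat" where
  "ancestor x i = (parent ^^ i) x"

lemma ancestor_0 [simp]: "ancestor x 0 = x"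
  by (simp add: ancestor_def)

lemma ancestor_depth:
  "x < n \<Longrightarrow> i \<le> depth x \<Longrightarrow> ancestor x i < n \<and> depth (ancestor x i) = depth x - i"
proof (induction i)
  case (Suc i)
  then have x: "ancestor x i < n" "depth (ancestor x i) = depth x - i" by auto
  with Suc.prems have "ancestor x i \<noteq> 0"
    by (metis depth_root zero_less_diff Suc_le_lessD neq0_conv)
  from parent_edge_depth[OF x(1) this] x Suc.prems edge_bound show ?case
    by (auto simp: ancestor_def)
qed simp

lemma ancestor_edge: "x < n \<Longrightarrow> i < depth x \<Longrightarrow> JE (ancestor x i) (ancestor x (Suc i))"
proof -
  assume "x < n" "i < depth x"
  then have x: "ancestor x i < n" "depth (ancestor x i) = depth x - i" "0 < depth x - i"
    using ancestor_depth[of x i] by auto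
  then have "ancestor x i \<noteq> 0" using depth_root by (metis less_irrefl)
  from parent_edge_depth[OF x(1) this] show ?thesis by (auto simp: ancestor_def intro: edge_sym)
qed

lemma ancestor_depth_eq_root: "x < n \<Longrightarrow> ancestor x (depth x) = 0"
  using ancestor_depth[of x "depth x"] depth_eq_0_iff by auto

lemma ancestor_chain:
  assumes "x < n" "k \<le> Suc (depth x)"
  shows "successively JE (map (ancestor x) [0..<k])" "distinct (map (ancestor x) [0..<k])"
proof -
  show "successively JE (map (ancestor x) [0..<k])"
    unfolding successively_conv_nth using assms ancestor_edge by auto
  have "inj_on (ancestor x) {0..<k}"
  proof (rule inj_onI)
    fix i j assume "i \<in> {0..<k}" "j \<in> {0..<k}" "ancestor x i = ancestor x j"
    then show "i = j"
      using assms ancestor_depth[OF assms(1), of i] ancestor_depth[OF assms(1), of j] by auto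
  qed
  then show "distinct (map (ancestor x) [0..<k])" by (simp add: distinct_map)
qed

lemma first_common_ancestor:
  assumes "x < n" "y < n"
  obtains i j where "i \<le> depth x" "j \<le> depth y" "ancestor x i = ancestor y j"
    "\<And>i'. i' < i \<Longrightarrow> ancestor x i' \<notin> ancestor y ` {..depth y}"
proof -
  define i where "i = (LEAST i. ancestor x i \<in> ancestor y ` {..depth y})"
  have root: "ancestor x (depth x) \<in> ancestor y ` {..depth y}"
    using ancestor_depth_eq_root assms by (metis atMost_iff image_eqI order_refl)
  have "ancestor x i \<in> ancestor y ` {..depth y}"
    unfolding i_def by (rule LeastI) (rule root)
  moreover have "i \<le> depth x"
    unfolding i_def by (rule Least_le) (rule root)
  moreover have "\<And>i'. i' < i \<Longrightarrow> ancestor x i' \<notin> ancestor y ` {..depth y}"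
    unfolding i_def by (rule not_less_Least)
  ultimately show ?thesis using that by auto
qed

lemma is_cycle_closing:
  assumes "successively JE xs" "successively JE ys" "distinct (b # xs @ ys)"
    and "xs \<noteq> []" "ys \<noteq> []"
    and "JE b (hd xs)" "JE (last xs) (last ys)" "JE (hd ys) b"
  shows "is_cycle JE (b # xs @ rev ys)"
proof -
  have "(\<lambda>x y. JE y x) = JE" using edge_sym by blast
  then have "successively JE (rev ys)" using assms(2) by (metis successively_rev)
  then have "successively JE (b # xs @ rev ys)"
    using assms by (auto simp: successively_Cons successively_append_iff hd_rev)
  moreover have "length (b # xs @ rev ys) \<ge> 3"
    using assms(4,5) by (cases xs; cases ys) auto
  moreover have "last (b # xs @ rev ys) = hd ys" using assms(5) by (simp add: last_rev)
  ultimately show ?thesis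
    using assms(3,8) successively_nth unfolding is_cycle_def by fastforce
qed

lemma depth_ancestor_less: "x < n \<Longrightarrow> 0 < i \<Longrightarrow> i \<le> depth x \<Longrightarrow> depth (ancestor x i) < depth x"
  using ancestor_depth[of x i] by simp

text \<open>Otherwise the ancestor chains of \<open>a\<close> and of \<open>parent b\<close>, joined at their first common
  vertex and closed up through \<open>b\<close>, would form a cycle.\<close>

lemma edge_is_parent_edge:
  assumes e: "JE a b" and le: "depth a \<le> depth b"
  shows "b \<noteq> 0 \<and> parent b = a"
proof -
  have a: "a < n" and b: "b < n" using edge_bound e by auto
  have b0: "b \<noteq> 0"
  proof
    assume "b = 0"
    then have "a = 0" using le depth_root depth_eq_0_iff[OF a] by simp
    with \<open>b = 0\<close> e no_loop show False by simp
  qed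
  moreover have "parent b = a"
  proof (rule ccontr)
    assume ca: "parent b \<noteq> a"
    define c where "c = parent b"
    have cb: "JE c b" "depth c + 1 = depth b" using parent_edge_depth[OF b b0] c_def by auto
    have c: "c < n" using cb edge_bound by auto
    have dca: "depth c \<le> depth a" using cb depth_edge_le[OF e] by simp
    obtain i j where ij: "i \<le> depth a" "j \<le> depth c" "ancestor a i = ancestor c j"
      and before: "\<And>i'. i' < i \<Longrightarrow> ancestor a i' \<notin> ancestor c ` {..depth c}"
      using first_common_ancestor[OF a c] by blast
    have "i \<noteq> 0"
    proof
      assume "i = 0"
      with ij have "a = ancestor c j" by simp
      with dca ij(2) depth_ancestor_less[OF c, of j] have "j = 0"
        by (metis le_less_trans less_le_not_le neq0_conv)
      with \<open>a = ancestor c j\<close> ca c_def show False by simp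
    qed
    define Cs where "Cs = map (ancestor c) [0..<Suc j]"
    define As where "As = map (ancestor a) [0..<i]"
    have Cs: "successively JE Cs" "distinct Cs" "hd Cs = c" "last Cs = ancestor a i"
      using ancestor_chain[OF c, of "Suc j"] ij
      by (auto simp: Cs_def hd_map last_map simp del: upt_Suc)
    have As: "successively JE As" "distinct As" "hd As = a" "last As = ancestor a (i - 1)"
      using ancestor_chain[OF a, of i] ij \<open>i \<noteq> 0\<close> by (auto simp: As_def hd_map last_map)
    have "set Cs \<subseteq> ancestor c ` {..depth c}"
      using ij(2) by (auto simp: Cs_def simp del: upt_Suc)
    moreover have "set As \<inter> ancestor c ` {..depth c} = {}"
      using before by (force simp: As_def)
    moreover have "b \<notin> set Cs"
    proof
      assume "b \<in> set Cs"
      then obtain k where "k \<le> j" "b = ancestor c k"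
        by (auto simp: Cs_def less_Suc_eq_le simp del: upt_Suc)
      then show False using ancestor_depth[OF c, of k] cb ij(2) by simp
    qed
    moreover have "b \<notin> set As"
    proof
      assume "b \<in> set As"
      then obtain k where k: "k < i" "b = ancestor a k" by (auto simp: As_def)
      then have "k \<noteq> 0" using e no_loop by (metis ancestor_0)
      with k ij(1) depth_ancestor_less[OF a, of k] le show False by simp
    qed
    ultimately have "distinct (b # Cs @ As)"
      using Cs As by auto
    moreover have "JE (last Cs) (last As)"
      using ancestor_edge[OF a, of "i - 1"] \<open>i \<noteq> 0\<close> ij(1) Cs(4) As(4) edge_sym by simp
    ultimately have "is_cycle JE (b # Cs @ rev As)"
      using is_cycle_closing Cs As cb(1) e edge_sym \<open>i \<noteq> 0\<close>
      by (auto simp: Cs_def As_def simp del: upt_Suc)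
    then show False using acyclic by blast
  qed
  ultimately show ?thesis by blast
qed

lemma edge_iff_parent_edge:
  assumes "a < n" "b < n"
  shows "JE a b \<longleftrightarrow> (b \<noteq> 0 \<and> parent b = a) \<or> (a \<noteq> 0 \<and> parent a = b)"
proof
  assume "JE a b"
  then show "(b \<noteq> 0 \<and> parent b = a) \<or> (a \<noteq> 0 \<and> parent a = b)"
    using edge_is_parent_edge[of a b] edge_is_parent_edge[of b a] edge_sym by fastforce
qed (use assms parent_edge_depth edge_sym in auto)

text \<open>Storing \<open>n - 1\<close> at the root lets the code determine the number of vertices as well.\<close>

definition tree_code :: "nat \<Rightarrow> nat" where
  "tree_code v = (if v = 0 then n - 1 else if v < n then parent v else 0)"

lemma tree_code_less: "n \<le> \<tau> \<Longrightarrow> v < \<tau> \<Longrightarrow> tree_code v < \<tau>"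
  using parent_edge_depth edge_bound nonempty unfolding tree_code_def by fastforce

end

lemma tree_code_inj:
  assumes T: "ordered_tree n JE" and T': "ordered_tree n' JE'" and "n \<le> \<tau>" "n' \<le> \<tau>"
    and code: "\<And>v. v < \<tau> \<Longrightarrow> rooted_tree.tree_code n JE v = rooted_tree.tree_code n' JE' v"
  shows "n = n' \<and> JE = JE'"
proof -
  interpret T: rooted_tree n JE by (rule rooted_tree.intro) (rule T)
  interpret T': rooted_tree n' JE' by (rule rooted_tree.intro) (rule T')
  have "n - 1 = n' - 1"
    using code[of 0] T.nonempty assms(3) by (simp add: T.tree_code_def T'.tree_code_def)
  then have n: "n = n'" using T.nonempty T'.nonempty by simp
  have parent: "T.parent v = T'.parent v" if "0 < v" "v < n" for v
    using code[of v] that n assms(3) unfolding T.tree_code_def T'.tree_code_def by auto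
  have "JE a b = JE' a b" for a b
  proof (cases "a < n \<and> b < n")
    case True
    then show ?thesis using T.edge_iff_parent_edge[of a b] T'.edge_iff_parent_edge[of a b] n parent
      by auto
  qed (use T.edge_bound T'.edge_bound n in blast)
  with n show ?thesis by blast
qed

definition trees_upto :: "nat \<Rightarrow> (nat \<times> (nat \<Rightarrow> nat \<Rightarrow> bool)) set" where
  "trees_upto \<tau> = {(n, JE). ordered_tree n JE \<and> n \<le> \<tau>}"

lemma finite_card_trees_upto: "finite (trees_upto \<tau>) \<and> card (trees_upto \<tau>) \<le> \<tau> ^ \<tau>"
proof -
  define code where "code = (\<lambda>(n, JE). restrict (rooted_tree.tree_code n JE) {0..<\<tau>})"
  have inj: "inj_on code (trees_upto \<tau>)"
  proof (rule inj_onI, clarify)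
    fix n JE n' JE'
    assume "(n, JE) \<in> trees_upto \<tau>" "(n', JE') \<in> trees_upto \<tau>" "code (n, JE) = code (n', JE')"
    then have "\<And>v. v < \<tau> \<Longrightarrow> rooted_tree.tree_code n JE v = rooted_tree.tree_code n' JE' v"
      by (simp add: code_def fun_eq_iff restrict_def) metis
    then show "n = n' \<and> JE = JE'"
      using tree_code_inj[of n JE n' JE' \<tau>] \<open>(n, JE) \<in> _\<close> \<open>(n', JE') \<in> _\<close>
      by (auto simp: trees_upto_def)
  qed
  have image: "code ` trees_upto \<tau> \<subseteq> {0..<\<tau>} \<rightarrow>\<^sub>E {0..<\<tau>}"
    using rooted_tree.tree_code_less[OF rooted_tree.intro]
    by (auto simp: trees_upto_def code_def)
  have finite: "finite ({0..<\<tau>} \<rightarrow>\<^sub>E {0..<\<tau>})" by (simp add: finite_PiE)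
  have "finite (trees_upto \<tau>)"
    using inj image finite by (meson finite_imageD finite_subset)
  moreover have "card (trees_upto \<tau>) \<le> card ({0..<\<tau>} \<rightarrow>\<^sub>E {0..<\<tau>})"
    using card_inj_on_le[OF inj image finite] .
  ultimately show ?thesis by (simp add: card_funcsetE)
qed

lemma trace_mono:
  assumes "\<And>i. i \<in> I \<Longrightarrow> C i \<subseteq> B i"
  shows "trace E I C n JE \<subseteq> trace E I B n JE"
proof
  fix S assume "S \<in> trace E I C n JE"
  then obtain phi f where "S = phi ` {0..<n}" "rainbow_copy E I C n JE phi f"
    unfolding trace_def by blast
  moreover from this(2) have "rainbow_copy E I B n JE phi f"
    using assms unfolding rainbow_copy_def by blast
  ultimately show "S \<in> trace E I B n JE" unfolding trace_def by blast
qed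

lemma trace_subset_index: "S \<in> trace E I B n JE \<Longrightarrow> S \<subseteq> I"
  unfolding trace_def rainbow_copy_def by auto

definition realised_supports ::
  "('v \<Rightarrow> 'v \<Rightarrow> bool) \<Rightarrow> nat \<Rightarrow> int set \<Rightarrow> (int \<Rightarrow> 'v set)
     \<Rightarrow> ((nat \<times> (nat \<Rightarrow> nat \<Rightarrow> bool)) \<times> int set) set" where
  "realised_supports E \<tau> I B = {((n, JE), S). (n, JE) \<in> trees_upto \<tau> \<and> S \<in> trace E I B n JE}"

lemma realised_supports_subset: "realised_supports E \<tau> I B \<subseteq> trees_upto \<tau> \<times> Pow I"
  unfolding realised_supports_def by (auto dest: trace_subset_index)

lemma finite_card_realised_supports:
  assumes "finite I"
  shows "finite (realised_supports E \<tau> I B) \<and> card (realised_supports E \<tau> I B) \<le> \<tau> ^ \<tau> * 2 ^ card I"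
proof -
  have finite: "finite (trees_upto \<tau> \<times> Pow I)"
    using finite_card_trees_upto assms by simp
  have "card (realised_supports E \<tau> I B) \<le> card (trees_upto \<tau> \<times> Pow I)"
    by (rule card_mono[OF finite realised_supports_subset])
  also have "\<dots> = card (trees_upto \<tau>) * 2 ^ card I"
    using assms by (simp add: card_cartesian_product card_Pow)
  also have "\<dots> \<le> \<tau> ^ \<tau> * 2 ^ card I"
    using finite_card_trees_upto by simp
  finally show ?thesis
    using finite_subset[OF realised_supports_subset finite] by blast
qed

lemma realised_supports_psubset:
  assumes "contraction V I B B'" "ordered_tree n JE" "n \<le> \<tau>"
    and "trace E I B n JE \<noteq> trace E I B' n JE"
  shows "realised_supports E \<tau> I B' \<subset> realised_supports E \<tau> I B"
proof -
  have "\<And>n JE. trace E I B' n JE \<subseteq> trace E I B n JE"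
    using assms(1) unfolding contraction_def by (intro trace_mono) blast
  moreover from this assms(4) obtain S where S: "S \<in> trace E I B n JE" "S \<notin> trace E I B' n JE"
    by blast
  moreover have "((n, JE), S) \<in> realised_supports E \<tau> I B - realised_supports E \<tau> I B'"
    using assms(2,3) S unfolding realised_supports_def trees_upto_def by simp
  ultimately show ?thesis
    unfolding realised_supports_def by blast
qed

lemma contraction_refl: "blockade V I B \<Longrightarrow> contraction V I B B"
  unfolding contraction_def blockade_def by auto

lemma contraction_trans: "contraction V I B C \<Longrightarrow> contraction V I C D \<Longrightarrow> contraction V I B D"
  unfolding contraction_def by blast

lemma contraction_shrinking_realised_supports:
  assumes "finite I" "\<not> support_invariant V E \<kappa> \<tau> I B"
  obtains B' where "contraction V I B B'" "\<kappa> * real (width I B) \<le> real (width I B')"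
    "card (realised_supports E \<tau> I B') < card (realised_supports E \<tau> I B)"
proof -
  obtain B' n JE where B': "contraction V I B B'" "\<kappa> * real (width I B) \<le> real (width I B')"
    and tree: "ordered_tree n JE" "n \<le> \<tau>" and lost: "trace E I B n JE \<noteq> trace E I B' n JE"
    using assms(2) unfolding support_invariant_def by blast
  have "realised_supports E \<tau> I B' \<subset> realised_supports E \<tau> I B"
    using B'(1) tree lost by (rule realised_supports_psubset)
  then have "card (realised_supports E \<tau> I B') < card (realised_supports E \<tau> I B)"
    using finite_card_realised_supports[OF assms(1)] by (blast intro: psubset_card_mono)
  with B' that show ?thesis by blast
qed

lemma exists_support_invariant_contraction:
  assumes "finite I" "0 < \<kappa>" "\<kappa> \<le> 1"
  shows "blockade V I B \<Longrightarrow> card (realised_supports E \<tau> I B) \<le> m \<Longrightarrow>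
    \<exists>B'. contraction V I B B' \<and> support_invariant V E \<kappa> \<tau> I B'
      \<and> \<kappa> ^ m * real (width I B) \<le> real (width I B')"
proof (induction m arbitrary: B rule: less_induct)
  case (less m B)
  show ?case
  proof (cases "support_invariant V E \<kappa> \<tau> I B")
    case True
    have "\<kappa> ^ m * real (width I B) \<le> real (width I B)"
      using assms(2,3) by (simp add: mult_left_le_one_le power_le_one)
    with True contraction_refl[OF less.prems(1)] show ?thesis by blast
  next
    case False
    then obtain B2 where B2: "contraction V I B B2" "\<kappa> * real (width I B) \<le> real (width I B2)"
      "card (realised_supports E \<tau> I B2) < card (realised_supports E \<tau> I B)"
      by (rule contraction_shrinking_realised_supports[OF assms(1)])
    then obtain m' where m': "m = Suc m'" "card (realised_supports E \<tau> I B2) \<le> m'"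
      using less.prems(2) by (cases m) auto
    moreover have "blockade V I B2" using B2(1) unfolding contraction_def by blast
    ultimately obtain B3 where B3: "contraction V I B2 B3" "support_invariant V E \<kappa> \<tau> I B3"
      "\<kappa> ^ m' * real (width I B2) \<le> real (width I B3)"
      using less.IH[of m' B2] by blast
    have "\<kappa> ^ m * real (width I B) = \<kappa> ^ m' * (\<kappa> * real (width I B))" using m' by simp
    also have "\<dots> \<le> \<kappa> ^ m' * real (width I B2)" using B2(2) assms(2) by (simp add: mult_left_mono)
    also have "\<dots> \<le> real (width I B3)" using B3(3) .
    finally show ?thesis using contraction_trans[OF B2(1) B3(1)] B3(2) by blast
  qed
qed

lemma support_invariant_same_width_contraction:
  assumes "support_invariant V E \<kappa> \<tau> I B" "contraction V I B C" "width I C = width I B" "\<kappa> \<le> 1"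
  shows "support_invariant V E \<kappa> \<tau> I C"
  unfolding support_invariant_def
proof (intro allI impI)
  fix D n JE
  assume D: "contraction V I C D \<and> \<kappa> * real (width I C) \<le> real (width I D)"
    and tree: "ordered_tree n JE \<and> n \<le> \<tau>"
  have "\<kappa> * real (width I B) \<le> real (width I C)"
    using assms(3) mult_right_mono[OF assms(4), of "real (width I B)"] by simp
  then have "trace E I B n JE = trace E I C n JE"
    using assms(1,2) tree unfolding support_invariant_def by blast
  moreover have "trace E I B n JE = trace E I D n JE"
    using assms(1,3) contraction_trans[OF assms(2)] D tree unfolding support_invariant_def by auto
  ultimately show "trace E I C n JE = trace E I D n JE" by simp
qed

lemma exists_equicardinal_contraction:
  assumes "blockade V I B" "I \<noteq> {}" "\<And>i. i \<in> I \<Longrightarrow> finite (B i)"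
  shows "\<exists>C. contraction V I B C \<and> equicardinal I C \<and> width I C = width I B"
proof -
  define w where "w = width I B"
  have "finite I" using assms(1) unfolding blockade_def by simp
  then have w: "w \<in> (\<lambda>i. card (B i)) ` I" "\<And>i. i \<in> I \<Longrightarrow> w \<le> card (B i)"
    using assms(2) unfolding w_def width_def by auto
  have "w \<noteq> 0"
  proof
    assume "w = 0"
    with w(1) obtain i where "i \<in> I" "card (B i) = 0" by auto
    with assms(1,3) show False unfolding blockade_def by auto
  qed
  have "\<exists>T. T \<subseteq> B i \<and> card T = w" if "i \<in> I" for i
    using w(2)[OF that] by (rule obtain_subset_with_card_n) blast
  then obtain C where C: "\<And>i. i \<in> I \<Longrightarrow> C i \<subseteq> B i \<and> card (C i) = w" by metis
  then have "\<And>i. i \<in> I \<Longrightarrow> C i \<noteq> {}" using \<open>w \<noteq> 0\<close> by force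
  with C assms(1) have "contraction V I B C"
    unfolding contraction_def blockade_def by blast
  moreover have "equicardinal I C" using C unfolding equicardinal_def by simp
  moreover have "(\<lambda>i. card (C i)) ` I = {w}" using C assms(2) by auto
  ultimately show ?thesis unfolding width_def w_def by auto
qed

theorem theorem4p1:
  fixes V :: "'v set" and E :: "'v \<Rightarrow> 'v \<Rightarrow> bool" and B :: "int \<Rightarrow> 'v set"
    and \<kappa> :: real and \<tau> K :: nat
  assumes "graph V E"
    and "\<tau> \<ge> 1" and "0 < \<kappa>" and "\<kappa> \<le> 1"
    and "K \<ge> 1"
    and "blockade V {1..int K} B"
  shows "\<exists>B'. contraction V {1..int K} B B' \<and> equicardinal {1..int K} B'
           \<and> support_invariant V E \<kappa> \<tau> {1..int K} B'
           \<and> real (width {1..int K} B') \<ge> \<kappa> ^ (2 ^ K * \<tau> ^ \<tau>) * real (width {1..int K} B)"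
proof -
  define I where "I = {1..int K}"
  have I: "finite I" "I \<noteq> {}" "card I = K" using assms(5) by (auto simp: I_def)
  have "card (realised_supports E \<tau> I B) \<le> 2 ^ K * \<tau> ^ \<tau>"
    using finite_card_realised_supports[OF I(1), of E \<tau> B] I(3) by (simp add: mult.commute)
  then obtain B1 where B1: "contraction V I B B1" "support_invariant V E \<kappa> \<tau> I B1"
    "\<kappa> ^ (2 ^ K * \<tau> ^ \<tau>) * real (width I B) \<le> real (width I B1)"
    using exists_support_invariant_contraction[OF I(1) assms(3,4) assms(6)[folded I_def]] by blast
  have "blockade V I B1" using B1(1) unfolding contraction_def by blast
  moreover have "\<And>i. i \<in> I \<Longrightarrow> finite (B1 i)"
    using calculation assms(1) unfolding blockade_def graph_def by (meson finite_subset)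
  ultimately obtain C where "contraction V I B1 C" "equicardinal I C" "width I C = width I B1"
    using exists_equicardinal_contraction I(2) by blast
  with B1 assms(4) show ?thesis
    unfolding I_def by (metis contraction_trans support_invariant_same_width_contraction)
qed

end
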